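(* Let $A$ be a Malcev algebra with Jacobian ideal $J$ and $J$-nucleus $N$, with $A=N\oplus J$ and $i:A/J\to N$ the induced isomorphism. If $\overline{\mathfrak{a}}$ and $\overline{\mathfrak{b}}$ are co-prime $i$-ideals of $N$, then their product $\overline{\mathfrak{a}}\overline{\mathfrak{b}}$ is an $i$-ideal of $N$.
   Context: A Malcev algebra $A$ over a field $k$ is a nonassociative $k$-algebra with bilinear product $[\cdot,\cdot]$ satisfying $[a,a]=0$ and $[J(a,b,c),a]=J(a,b,[a,c])$ for all $a,b,c\in A$, where $J(x,y,z)=[[x,y],z]+[[y,z],x]+[[z,x],y]$. $J=J(A,A,A)$ is the span of all Jacobians; the $J$-nucleus is $N=\{x\in A: J(x,A,A)=0\}$, a Lie algebra. When $A=N\oplus J$, $i:A/J\to N$ is the induced isomorphism. A subset $X$ of $N$ is an $i$-ideal of $N$ if $i(n)X\subseteq X$ for every $n\in A/J$ (products taken in $N$). Two $i$-ideals $\overline{\mathfrak{a}},\overline{\mathfrak{b}}$ are co-prime if $\overline{\mathfrak{a}}+\overline{\mathfrak{b}}=N$. The product $\overline{\mathfrak{a}}\overline{\mathfrak{b}}$ is the span of all $[x,y]$, $x\in\overline{\mathfrak{a}}$, $y\in\overline{\mathfrak{b}}$. *)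

theory Defs
  imports Main "HOL.Vector_Spaces"
begin

definition bilinear_prod :: "('k::field \<Rightarrow> 'a::ab_group_add \<Rightarrow> 'a) \<Rightarrow> ('a \<Rightarrow> 'a \<Rightarrow> 'a) \<Rightarrow> bool" where
  "bilinear_prod scale br \<longleftrightarrow>
     (\<forall>x y z. br (x + y) z = br x z + br y z) \<and>
     (\<forall>x y z. br x (y + z) = br x y + br x z) \<and>
     (\<forall>c x y. br (scale c x) y = scale c (br x y)) \<and>
     (\<forall>c x y. br x (scale c y) = scale c (br x y))"

definition jac :: "('a \<Rightarrow> 'a \<Rightarrow> 'a::ab_group_add) \<Rightarrow> 'a \<Rightarrow> 'a \<Rightarrow> 'a \<Rightarrow> 'a" where
  "jac br x y z = br (br x y) z + br (br y z) x + br (br z x) y"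

definition malcev_algebra :: "('k::field \<Rightarrow> 'a::ab_group_add \<Rightarrow> 'a) \<Rightarrow> ('a \<Rightarrow> 'a \<Rightarrow> 'a) \<Rightarrow> bool" where
  "malcev_algebra scale br \<longleftrightarrow>
     vector_space scale \<and> bilinear_prod scale br \<and>
     (\<forall>a. br a a = 0) \<and>
     (\<forall>a b c. br (jac br a b c) a = jac br a b (br a c))"

definition jacobian_ideal :: "('k::field \<Rightarrow> 'a::ab_group_add \<Rightarrow> 'a) \<Rightarrow> ('a \<Rightarrow> 'a \<Rightarrow> 'a) \<Rightarrow> 'a set" where
  "jacobian_ideal scale br = module.span scale {jac br x y z | x y z. True}"

definition J_nucleus :: "('a \<Rightarrow> 'a \<Rightarrow> 'a::ab_group_add) \<Rightarrow> 'a set" where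
  "J_nucleus br = {x. \<forall>y z. jac br x y z = 0}"

definition direct_sum_decomp :: "('k::field \<Rightarrow> 'a::ab_group_add \<Rightarrow> 'a) \<Rightarrow> 'a set \<Rightarrow> 'a set \<Rightarrow> bool" where
  "direct_sum_decomp scale U V \<longleftrightarrow>
     module.subspace scale U \<and> module.subspace scale V \<and>
     {u + v | u v. u \<in> U \<and> v \<in> V} = UNIV \<and> U \<inter> V = {0}"

definition quot_space :: "'a::ab_group_add set \<Rightarrow> 'a set set" where
  "quot_space J = {(\<lambda>j. a + j) ` J | a. True}"

definition induced_iso :: "'a set \<Rightarrow> 'a set \<Rightarrow> 'a" where
  "induced_iso N C = (THE n. n \<in> N \<and> n \<in> C)"

definition i_ideal :: "('a \<Rightarrow> 'a \<Rightarrow> 'a::ab_group_add) \<Rightarrow> 'a set \<Rightarrow> 'a set \<Rightarrow> 'a set \<Rightarrow> bool" where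
  "i_ideal br J N X \<longleftrightarrow> X \<subseteq> N \<and>
     (\<forall>C \<in> quot_space J. \<forall>x \<in> X. br (induced_iso N C) x \<in> X)"

definition coprime_sets :: "'a::ab_group_add set \<Rightarrow> 'a set \<Rightarrow> 'a set \<Rightarrow> bool" where
  "coprime_sets N X Y \<longleftrightarrow> {x + y | x y. x \<in> X \<and> y \<in> Y} = N"

definition prod_set :: "('k::field \<Rightarrow> 'a::ab_group_add \<Rightarrow> 'a) \<Rightarrow> ('a \<Rightarrow> 'a \<Rightarrow> 'a) \<Rightarrow> 'a set \<Rightarrow> 'a set \<Rightarrow> 'a set" where
  "prod_set scale br X Y = module.span scale {br x y | x y. x \<in> X \<and> y \<in> Y}"

end

theory Submission
  imports Defs
begin

text \<open>Since every Jacobian \<open>jac br n x y\<close> with \<open>n \<in> N\<close> vanishes, anticommutativity turns the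
  Jacobi identity into the Leibniz rule \<open>[n,[x,y]] = [[n,x],y] + [x,[n,y]]\<close>: each element of \<open>N\<close>
  acts as a derivation.  Because \<open>A = N \<oplus> J\<close>, the map \<open>i\<close> is a bijection from the cosets of \<open>J\<close>
  onto \<open>N\<close>, so an \<open>i\<close>-ideal is just a subset of \<open>N\<close> stable under brackets with \<open>N\<close>.  A derivation
  stabilising \<open>\<aa>\<close> and \<open>\<bb>\<close> stabilises all products \<open>[x,y]\<close> and hence their span.\<close>

lemma bilinear_prodD:
  assumes "bilinear_prod scale br"
  shows "br (x + y) z = br x z + br y z"
    and "br x (y + z) = br x y + br x z"
    and "br (scale c x) y = scale c (br x y)"
    and "br x (scale c y) = scale c (br x y)"
  using assms unfolding bilinear_prod_def by blast+

lemma bilinear_prod_neg_right: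
  assumes "bilinear_prod scale br"
  shows "br x (- y) = - br x y"
proof -
  have "br x 0 = 0" using bilinear_prodD(2)[OF assms, of x 0 0] by simp
  then have "br x (- y) + br x y = 0" by (simp flip: bilinear_prodD(2)[OF assms])
  then show ?thesis by (simp add: eq_neg_iff_add_eq_0)
qed

lemma bilinear_prod_anticommute:
  assumes bil: "bilinear_prod scale br" and alt: "\<And>x. br x x = 0"
  shows "br x y = - br y x"
proof -
  have "0 = br (x + y) (x + y)" using alt by simp
  also have "\<dots> = br x (x + y) + br y (x + y)" by (rule bilinear_prodD(1)[OF bil])
  also have "\<dots> = (br x x + br x y) + (br y x + br y y)"
    by (simp only: bilinear_prodD(2)[OF bil])
  also have "\<dots> = br x y + br y x" by (simp add: alt)
  finally show ?thesis by (simp add: eq_neg_iff_add_eq_0)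
qed

lemma jac_eq_0_imp_Leibniz:
  assumes bil: "bilinear_prod scale br" and alt: "\<And>x. br x x = 0"
    and jac: "jac br n x y = 0"
  shows "br n (br x y) = br (br n x) y + br x (br n y)"
proof -
  note anti = bilinear_prod_anticommute[OF bil alt]
  have "br (br x y) n + (br (br n x) y + br (br y n) x) = 0"
    using jac unfolding jac_def by (simp add: ac_simps)
  then have "br (br n x) y + br (br y n) x = br n (br x y)"
    by (simp add: add_eq_0_iff anti[of n "br x y"])
  then have "br n (br x y) = br (br n x) y + br (br y n) x" ..
  also have "br (br y n) x = - br x (br y n)" by (rule anti)
  also have "\<dots> = - br x (- br n y)" by (simp only: anti[of y n])
  finally show ?thesis by (simp add: bilinear_prod_neg_right[OF bil])
qed

context vector_space
begin

lemma induced_iso_eq: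
  assumes dec: "direct_sum_decomp scale N J"
    and "n \<in> N" and "n \<in> (\<lambda>j. c + j) ` J"
  shows "induced_iso N ((\<lambda>j. c + j) ` J) = n"
  unfolding induced_iso_def
proof (rule the_equality)
  have N: "subspace N" and J: "subspace J" and cap: "N \<inter> J = {0}"
    using dec unfolding direct_sum_decomp_def by auto
  fix m assume m: "m \<in> N \<and> m \<in> (\<lambda>j. c + j) ` J"
  obtain j j' where "j \<in> J" "m = c + j" "j' \<in> J" "n = c + j'"
    using m \<open>n \<in> (\<lambda>j. c + j) ` J\<close> by blast
  then have "m - n \<in> J" using subspace_diff[OF J] by simp
  moreover have "m - n \<in> N" using subspace_diff[OF N] m \<open>n \<in> N\<close> by blast
  ultimately have "m - n = 0" using cap by blast
  then show "m = n" by simp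
qed (use assms in blast)

lemma induced_iso_in:
  assumes dec: "direct_sum_decomp scale N J" and "C \<in> quot_space J"
  shows "induced_iso N C \<in> N"
proof -
  obtain c where C: "C = (\<lambda>j. c + j) ` J" using \<open>C \<in> quot_space J\<close> unfolding quot_space_def by blast
  obtain u v where "c = u + v" "u \<in> N" "v \<in> J"
    using dec unfolding direct_sum_decomp_def by blast
  moreover have "- v \<in> J"
    using \<open>v \<in> J\<close> dec subspace_neg unfolding direct_sum_decomp_def by blast
  ultimately have "u \<in> C" unfolding C by (auto intro!: image_eqI[where x="- v"])
  then show ?thesis using induced_iso_eq[OF dec \<open>u \<in> N\<close>] C \<open>u \<in> N\<close> by simp
qed

lemma induced_iso_coset_self:
  assumes dec: "direct_sum_decomp scale N J" and "n \<in> N"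
  shows "induced_iso N ((\<lambda>j. n + j) ` J) = n"
proof (rule induced_iso_eq[OF assms])
  have "0 \<in> J" using dec subspace_0 unfolding direct_sum_decomp_def by blast
  then show "n \<in> (\<lambda>j. n + j) ` J" by (intro image_eqI[where x=0]) simp_all
qed

lemma i_ideal_iff_stable:
  assumes dec: "direct_sum_decomp scale N J"
  shows "i_ideal br J N X \<longleftrightarrow> X \<subseteq> N \<and> (\<forall>n \<in> N. \<forall>x \<in> X. br n x \<in> X)"
proof -
  have "(\<forall>C \<in> quot_space J. P (induced_iso N C)) \<longleftrightarrow> (\<forall>n \<in> N. P n)" for P
  proof
    assume P: "\<forall>C \<in> quot_space J. P (induced_iso N C)"
    show "\<forall>n \<in> N. P n"
    proof
      fix n assume "n \<in> N"
      have "(\<lambda>j. n + j) ` J \<in> quot_space J" unfolding quot_space_def by blast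
      then have "P (induced_iso N ((\<lambda>j. n + j) ` J))" using P by blast
      then show "P n" by (simp only: induced_iso_coset_self[OF dec \<open>n \<in> N\<close>])
    qed
  qed (simp add: induced_iso_in[OF dec])
  from this[of "\<lambda>n. \<forall>x \<in> X. br n x \<in> X"] show ?thesis
    unfolding i_ideal_def by simp
qed

lemma prod_set_Leibniz_stable:
  assumes bil: "bilinear_prod scale br"
    and Leibniz: "\<And>x y. br n (br x y) = br (br n x) y + br x (br n y)"
    and X: "\<And>x. x \<in> X \<Longrightarrow> br n x \<in> X" and Y: "\<And>y. y \<in> Y \<Longrightarrow> br n y \<in> Y"
    and z: "z \<in> prod_set scale br X Y"
  shows "br n z \<in> prod_set scale br X Y"
  using z unfolding prod_set_def
proof (induction rule: span_induct_alt)
  case base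
  show ?case using bilinear_prodD(4)[OF bil, of n 0 0] by (simp add: span_zero)
next
  case (step c w z)
  then obtain x y where "w = br x y" "x \<in> X" "y \<in> Y" by blast
  moreover have "br (br n x) y \<in> {br x y | x y. x \<in> X \<and> y \<in> Y}"
    and "br x (br n y) \<in> {br x y | x y. x \<in> X \<and> y \<in> Y}"
    using X Y \<open>x \<in> X\<close> \<open>y \<in> Y\<close> by blast+
  ultimately have "br n w \<in> span {br x y | x y. x \<in> X \<and> y \<in> Y}"
    using Leibniz by (simp add: span_add span_base)
  then show ?case using step.IH by (simp add: bilinear_prodD(2,4)[OF bil] span_add span_scale)
qed

end

theorem lemma3p10:
  fixes scale :: "'k::field \<Rightarrow> 'a::ab_group_add \<Rightarrow> 'a"
    and br :: "'a \<Rightarrow> 'a \<Rightarrow> 'a"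
    and a b :: "'a set"
  assumes "malcev_algebra scale br"
    and "direct_sum_decomp scale (J_nucleus br) (jacobian_ideal scale br)"
    and "i_ideal br (jacobian_ideal scale br) (J_nucleus br) a"
    and "i_ideal br (jacobian_ideal scale br) (J_nucleus br) b"
    and "coprime_sets (J_nucleus br) a b"
  shows "i_ideal br (jacobian_ideal scale br) (J_nucleus br) (prod_set scale br a b)"
proof -
  interpret vector_space scale using assms(1) by (simp add: malcev_algebra_def)
  have bil: "bilinear_prod scale br" and alt: "\<And>x. br x x = 0"
    using assms(1) unfolding malcev_algebra_def by auto
  note stable = i_ideal_iff_stable[OF assms(2)]
  have a: "a \<subseteq> J_nucleus br \<and> (\<forall>n \<in> J_nucleus br. \<forall>x \<in> a. br n x \<in> a)"
    using assms(3) unfolding stable .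
  have b: "b \<subseteq> J_nucleus br \<and> (\<forall>n \<in> J_nucleus br. \<forall>y \<in> b. br n y \<in> b)"
    using assms(4) unfolding stable .
  have "subspace (J_nucleus br)"
    using assms(2) unfolding direct_sum_decomp_def by blast
  moreover have "{br x y | x y. x \<in> a \<and> y \<in> b} \<subseteq> J_nucleus br"
    using a b by blast
  ultimately have "prod_set scale br a b \<subseteq> J_nucleus br"
    unfolding prod_set_def by (rule span_minimal[rotated])
  moreover have "br n z \<in> prod_set scale br a b"
    if n: "n \<in> J_nucleus br" and z: "z \<in> prod_set scale br a b" for n z
  proof (rule prod_set_Leibniz_stable[OF bil _ _ _ z])
    show "br n (br x y) = br (br n x) y + br x (br n y)" for x y
      using n jac_eq_0_imp_Leibniz[OF bil alt] unfolding J_nucleus_def by blast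
  qed (use a b n in blast)+
  ultimately show ?thesis unfolding stable by blast
qed

end
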